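(* Let $P$ be a trajectory set consisting of lines parallel to a vector $q\in\mathbb{R}^d\setminus\{0\}$, and let $\Lambda=P\cap q^\perp$. Then $D^-(\Lambda)=\ell^-(P)$ and $D^+(\Lambda)=\ell^+(P)$. In particular, $P$ is homogeneous if and only if $D^-(\Lambda)=D^+(\Lambda)$, and in this case \[ \ell(P)=D^-(\Lambda)=D^+(\Lambda)=\lim_{a\to\infty}\frac{\#(\Lambda\cap B_a^{d-1}(x))}{|B_a^{d-1}|}\quad\text{for all }x\in q^\perp\cong\mathbb{R}^{d-1}. \]
   Context: $q^\perp=\{x:\langle x,q\rangle=0\}$, identified with $\mathbb{R}^{d-1}$. For $\Lambda\subseteq\mathbb{R}^{d-1}$: $D^-(\Lambda)=\liminf_{a\to\infty}\inf_x\#(\Lambda\cap B_a^{d-1}(x))/|B_a^{d-1}|$, $D^+(\Lambda)=\limsup_{a\to\infty}\sup_x\#(\Lambda\cap B_a^{d-1}(x))/|B_a^{d-1}|$, with $B_a^{n}(x)$ the closed ball. A trajectory set is a countable collection of trajectories (images of curves $\mathbb{R}\to\mathbb{R}^d$ rectifiable on bounded intervals), identified with their union. $\mathcal{M}^P(a,x)$ is the total arc length of trajectories of $P$ inside $B_a^d(x)$; $\ell^-(P)=\liminf_{a\to\infty}\inf_{x\in\mathbb{R}^d}\mathcal{M}^P(a,x)/|B_a^d|$, $\ell^+(P)=\limsup_{a\to\infty}\sup_{x\in\mathbb{R}^d}\mathcal{M}^P(a,x)/|B_a^d|$; $P$ is homogeneous if $\ell^-(P)=\ell^+(P)=:\ell(P)$.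 *)

theory Defs
  imports "HOL-Analysis.Analysis"
begin

definition perp :: "'a::euclidean_space \<Rightarrow> 'a set" where
  "perp q = {x. x \<bullet> q = 0}"

definition ball_volume :: "nat \<Rightarrow> real \<Rightarrow> ennreal" where
  "ball_volume n a = ennreal (unit_ball_vol (real n) * a ^ n)"

text \<open>Lower and upper densities of a point set Lambda contained in q-perp, where q-perp
  (with the induced Euclidean metric) is identified with R^(d-1), d = DIM('a).\<close>
definition lower_density :: "'a::euclidean_space \<Rightarrow> 'a set \<Rightarrow> ennreal" where
  "lower_density q \<Lambda> = Liminf at_top (\<lambda>a::real. INF x\<in>perp q.
      emeasure (count_space UNIV) (\<Lambda> \<inter> cball x a) / ball_volume (DIM('a) - 1) a)"

definition upper_density :: "'a::euclidean_space \<Rightarrow> 'a set \<Rightarrow> ennreal" where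
  "upper_density q \<Lambda> = Limsup at_top (\<lambda>a::real. SUP x\<in>perp q.
      emeasure (count_space UNIV) (\<Lambda> \<inter> cball x a) / ball_volume (DIM('a) - 1) a)"

text \<open>A trajectory set is represented by a countable set of curves real \<Rightarrow> 'a; the point set
  P is the union of their images.\<close>
definition traj_union :: "(real \<Rightarrow> 'a) set \<Rightarrow> 'a set" where
  "traj_union T = (\<Union>\<gamma>\<in>T. range \<gamma>)"

definition arc_length_in :: "(real \<Rightarrow> 'a::real_normed_vector) \<Rightarrow> 'a set \<Rightarrow> ennreal" where
  "arc_length_in \<gamma> S = (\<integral>\<^sup>+ t. indicator {t. \<gamma> t \<in> S} t *
      ennreal (norm (vector_derivative \<gamma> (at t))) \<partial>lborel)"

definition traj_mass :: "(real \<Rightarrow> 'a::euclidean_space) set \<Rightarrow> real \<Rightarrow> 'a \<Rightarrow> ennreal" where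
  "traj_mass T a x = (\<integral>\<^sup>+ \<gamma>. arc_length_in \<gamma> (cball x a) \<partial>count_space T)"

definition lower_line_density :: "(real \<Rightarrow> 'a::euclidean_space) set \<Rightarrow> ennreal" where
  "lower_line_density T = Liminf at_top (\<lambda>a::real. INF x. traj_mass T a x / emeasure lborel (cball (0::'a) a))"

definition upper_line_density :: "(real \<Rightarrow> 'a::euclidean_space) set \<Rightarrow> ennreal" where
  "upper_line_density T = Limsup at_top (\<lambda>a::real. SUP x. traj_mass T a x / emeasure lborel (cball (0::'a) a))"

definition homogeneous :: "(real \<Rightarrow> 'a::euclidean_space) set \<Rightarrow> bool" where
  "homogeneous T \<longleftrightarrow> lower_line_density T = upper_line_density T"

definition line_density :: "(real \<Rightarrow> 'a::euclidean_space) set \<Rightarrow> ennreal" where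
  "line_density T = lower_line_density T"

definition line_curve :: "'a::euclidean_space \<Rightarrow> 'a \<Rightarrow> real \<Rightarrow> 'a" where
  "line_curve q b = (\<lambda>t. b + t *\<^sub>R q)"

end

theory Submission
  imports Defs "HOL-Real_Asymp.Real_Asymp"
begin

(*
  Write u = q / |q|.  Every line of P meets q-perp exactly once, at the orthogonal projection of
  its base point, so the arc length of P inside B_a(x) is the sum over l in Lambda of the lengths
  of the chords that the lines l + R u cut out of B_a(x).

  Slicing B_a(x) perpendicularly to u turns this mass into the integral over s in [-a, a] of the
  counts #(Lambda \<inter> B^(d-1)_r(x')) with r = sqrt (a^2 - s^2).  Hence bounds c |B^(d-1)_rho| on
  the counts for all rho >= R give bounds c |B^d_b| on the mass with b = sqrt (a^2 -/+ R^2),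
  and b / a -> 1.

  Conversely, integrate the mass in balls of a fixed radius r over the cylinder of height 1 around
  the disc B^(d-1)_rho(y) in q-perp.  Every line through B^(d-1)_(rho-r)(y) contributes exactly
  |B^d_r| and no line outside B^(d-1)_(rho+r)(y) contributes, so the counts are bounded by the
  mass densities at radius r up to the factors ((rho -/+ r) / rho)^(d-1) -> 1.
*)

section \<open>Division and limits\<close>

lemma ennreal_divide_le_iff: "b \<noteq> 0 \<Longrightarrow> b \<noteq> top \<Longrightarrow> a / b \<le> c \<longleftrightarrow> a \<le> c * (b::ennreal)"
proof
  assume b: "b \<noteq> 0" "b \<noteq> top" and le: "a / b \<le> c"
  have "a = (a / b) * b" using b by (simp add: ennreal_divide_times top.not_eq_extremum)
  also have "\<dots> \<le> c * b" using le by (rule mult_right_mono) simp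
  finally show "a \<le> c * b" .
next
  assume b: "b \<noteq> 0" "b \<noteq> top" and le: "a \<le> c * b"
  have "a / b \<le> (c * b) / b" using le by (rule divide_right_mono_ennreal)
  also have "\<dots> = c" using b by (rule ennreal_mult_divide_eq)
  finally show "a / b \<le> c" .
qed

lemma ennreal_le_divide_iff: "b \<noteq> 0 \<Longrightarrow> b \<noteq> top \<Longrightarrow> c \<le> a / b \<longleftrightarrow> c * b \<le> (a::ennreal)"
proof
  assume b: "b \<noteq> 0" "b \<noteq> top" and le: "c \<le> a / b"
  have "c * b \<le> (a / b) * b" using le by (rule mult_right_mono) simp
  also have "\<dots> = a" using b by (simp add: ennreal_divide_times top.not_eq_extremum)
  finally show "c * b \<le> a" .
next
  assume b: "b \<noteq> 0" "b \<noteq> top" and le: "c * b \<le> a"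
  have "c = (c * b) / b" using b by (simp add: ennreal_mult_divide_eq)
  also have "\<dots> \<le> a / b" using le by (rule divide_right_mono_ennreal)
  finally show "c \<le> a / b" .
qed

lemma le_Liminf_scaled_lower_bound:
  fixes f :: "real \<Rightarrow> ennreal" and g :: "real \<Rightarrow> real"
  assumes g: "(g \<longlongrightarrow> 1) at_top" and bound: "\<forall>\<^sub>F x in at_top. c * ennreal (g x ^ n) \<le> f x"
  shows "c \<le> Liminf at_top f"
proof -
  have "((\<lambda>x. c * ennreal (g x ^ n)) \<longlongrightarrow> c * ennreal (1 ^ n)) at_top"
    by (intro tendsto_mult_ennreal tendsto_const tendsto_ennrealI tendsto_power g) auto
  then have "c = Liminf at_top (\<lambda>x. c * ennreal (g x ^ n))"
    by (intro lim_imp_Liminf[symmetric]) auto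
  also have "\<dots> \<le> Liminf at_top f"
    using bound by (rule Liminf_mono)
  finally show ?thesis .
qed

lemma Limsup_le_scaled_upper_bound:
  fixes f :: "real \<Rightarrow> ennreal" and g :: "real \<Rightarrow> real"
  assumes g: "(g \<longlongrightarrow> 1) at_top" and bound: "\<forall>\<^sub>F x in at_top. f x \<le> c * ennreal (g x ^ n)"
  shows "Limsup at_top f \<le> c"
proof -
  have "((\<lambda>x. c * ennreal (g x ^ n)) \<longlongrightarrow> c * ennreal (1 ^ n)) at_top"
    by (intro tendsto_mult_ennreal tendsto_const tendsto_ennrealI tendsto_power g) auto
  then have "c = Limsup at_top (\<lambda>x. c * ennreal (g x ^ n))"
    by (intro lim_imp_Limsup[symmetric]) auto
  moreover have "Limsup at_top f \<le> Limsup at_top (\<lambda>x. c * ennreal (g x ^ n))"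
    using bound by (rule Limsup_mono)
  ultimately show ?thesis by simp
qed

lemma tendsto_of_Liminf_INF_eq_Limsup_SUP:
  fixes f :: "'i \<Rightarrow> 'b \<Rightarrow> 'c::{complete_linorder, linorder_topology}"
  assumes x: "x \<in> X" and F: "F \<noteq> bot"
    and lim: "Liminf F (\<lambda>a. INF y\<in>X. f y a) = l" "Limsup F (\<lambda>a. SUP y\<in>X. f y a) = l"
  shows "((\<lambda>a. f x a) \<longlongrightarrow> l) F"
proof (rule Liminf_eq_Limsup)
  have "l \<le> Liminf F (\<lambda>a. f x a)"
    unfolding lim(1)[symmetric] by (intro Liminf_mono always_eventually allI INF_lower x)
  moreover have "Limsup F (\<lambda>a. f x a) \<le> l"
    unfolding lim(2)[symmetric] by (intro Limsup_mono always_eventually allI SUP_upper x)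
  moreover have "Liminf F (\<lambda>a. f x a) \<le> Limsup F (\<lambda>a. f x a)"
    using F by (rule Liminf_le_Limsup)
  ultimately show "Liminf F (\<lambda>a. f x a) = l" "Limsup F (\<lambda>a. f x a) = l"
    by (auto intro: antisym order_trans)
qed (use F in simp)

section \<open>Volumes of balls\<close>

lemma ball_volume_nonzero[simp]:
  assumes "a > 0"
  shows "ball_volume n a \<noteq> 0"
proof -
  have "unit_ball_vol (real n) \<noteq> 0"
    using unit_ball_vol_pos[of "real n"] by linarith
  then show ?thesis using assms by (simp add: ball_volume_def)
qed

lemma ball_volume_finite[simp]: "ball_volume n a \<noteq> top"
  by (simp add: ball_volume_def)

lemma ball_volume_mono: "0 \<le> a \<Longrightarrow> a \<le> b \<Longrightarrow> ball_volume n a \<le> ball_volume n b"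
  unfolding ball_volume_def by (intro ennreal_leI mult_left_mono power_mono) auto

lemma ball_volume_scale:
  assumes "a > 0" "b \<ge> 0"
  shows "ennreal ((b / a) ^ n) * ball_volume n a = ball_volume n b"
  using assms unfolding ball_volume_def
  by (simp add: ennreal_mult'[symmetric] power_divide field_simps)

lemma borel_measurable_ball_volume[measurable]: "ball_volume n \<in> borel_measurable borel"
  unfolding ball_volume_def by measurable

lemma emeasure_cball_eq_ball_volume:
  "0 \<le> a \<Longrightarrow> emeasure lborel (cball (x::'a::euclidean_space) a) = ball_volume DIM('a) a"
  by (simp add: emeasure_cball ball_volume_def)

lemma emeasure_cball_nonzero[simp]: "r > 0 \<Longrightarrow> emeasure lborel (cball (x::'a::euclidean_space) r) \<noteq> 0"
  by (simp add: emeasure_cball_eq_ball_volume ball_volume_nonzero)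

lemma emeasure_cball_finite[simp]: "emeasure lborel (cball (x::'a::euclidean_space) r) \<noteq> top"
  using emeasure_lborel_cball_finite[of x r] by simp

lemma emeasure_cball_scale:
  assumes "a > 0" "b \<ge> 0"
  shows "ennreal ((b / a) ^ DIM('a)) * emeasure lborel (cball (0::'a::euclidean_space) a)
    = emeasure lborel (cball (0::'a) b)"
  using assms by (simp add: emeasure_cball_eq_ball_volume ball_volume_scale)

lemma unit_ball_vol_Suc:
  "unit_ball_vol (real n) * Beta (1/2) (real n / 2 + 1) = unit_ball_vol (real (Suc n))"
  by (auto simp: unit_ball_vol_def Beta_def Gamma_eq_zero_iff field_simps
      Gamma_one_half_real powr_half_sqrt [symmetric] powr_add [symmetric])

lemma nn_integral_ball_volume_slices:
  assumes r: "r > 0"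
  shows "(\<integral>\<^sup>+s. indicator {-r..r} s * ball_volume n (sqrt (r^2 - s^2)) \<partial>lborel) = ball_volume (Suc n) r"
proof -
  have "(\<integral>\<^sup>+s. indicator {-r..r} s * ball_volume n (sqrt (r^2 - s^2)) \<partial>lborel)
     = ennreal (unit_ball_vol (real n)) *
       (\<integral>\<^sup>+ (y::real). indicator {-r..r} y * (sqrt (r ^ 2 - y ^ 2)) ^ n \<partial>lborel)"
    by (subst nn_integral_cmult [symmetric])
       (auto simp: ball_volume_def mult_ac ennreal_mult' [symmetric] indicator_def intro!: nn_integral_cong)
  also have "(\<integral>\<^sup>+ (y::real). indicator {-r..r} y * (sqrt (r ^ 2 - y ^ 2)) ^ n \<partial>lborel) =
               (\<integral>\<^sup>+ (y::real). r ^ n * indicator {-1..1} y * (sqrt (1 - y ^ 2)) ^ n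
               \<partial>(distr lborel borel ((*) (1/r))))"
    using r by (subst nn_integral_distr)
       (auto simp: indicator_def field_simps real_sqrt_divide intro!: nn_integral_cong)
  also have "\<dots> = (\<integral>\<^sup>+ x. ennreal (r ^ Suc n) * (indicator {- 1..1} x * sqrt (1 - x\<^sup>2) ^ n) \<partial>lborel)"
    using r by (subst lborel_distr_mult) (auto simp: nn_integral_density ennreal_mult' [symmetric] mult_ac)
  also have "\<dots> = ennreal (r ^ Suc n) * (\<integral>\<^sup>+ x. indicator {- 1..1} x * sqrt (1 - x\<^sup>2) ^ n \<partial>lborel)"
    by (subst nn_integral_cmult) auto
  also note emeasure_cball_aux_integral
  also have "ennreal (unit_ball_vol (real n)) * (ennreal (r ^ Suc n) * ennreal (Beta (1/2) (n / 2 + 1)))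
      = ennreal (unit_ball_vol n * Beta (1/2) (n / 2 + 1) * r ^ Suc n)"
    using r by (simp add: ennreal_mult' [symmetric] mult_ac)
  also note unit_ball_vol_Suc
  finally show ?thesis by (simp add: ball_volume_def)
qed

lemma emeasure_cball_slices:
  assumes "b > 0"
  shows "(\<integral>\<^sup>+s. indicator {-b..b} s * ball_volume (DIM('a) - 1) (sqrt (b^2 - s^2)) \<partial>lborel)
    = emeasure lborel (cball (0::'a::euclidean_space) b)"
proof -
  have "DIM('a) = Suc (DIM('a) - 1)"
    using DIM_positive[where 'a='a] by linarith
  then show ?thesis
    using nn_integral_ball_volume_slices[OF assms, of "DIM('a) - 1"] assms
    by (simp add: emeasure_cball_eq_ball_volume)
qed

section \<open>Slicing Euclidean space along a unit vector\<close>

definition perp_proj :: "'a::euclidean_space \<Rightarrow> 'a \<Rightarrow> 'a" where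
  "perp_proj u z = z - (z \<bullet> u) *\<^sub>R u"

definition slab :: "'a::euclidean_space \<Rightarrow> 'a set" where
  "slab u = {z. 0 \<le> z \<bullet> u \<and> z \<bullet> u \<le> 1}"

definition cylinder :: "'a::euclidean_space \<Rightarrow> 'a \<Rightarrow> real \<Rightarrow> 'a set" where
  "cylinder u y R = {z. norm (perp_proj u z - y) \<le> R \<and> 0 \<le> z \<bullet> u \<and> z \<bullet> u \<le> 1}"

lemma continuous_on_perp_proj[continuous_intros]: "continuous_on S (perp_proj u)"
  unfolding perp_proj_def by (intro continuous_intros)

lemma borel_measurable_perp_proj[measurable]: "perp_proj u \<in> borel_measurable borel"
  by (intro borel_measurable_continuous_onI continuous_on_perp_proj)

lemma slab_in_borel[measurable]: "slab u \<in> sets borel"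
  unfolding slab_def by (intro borel_closed closed_Collect_conj closed_Collect_le continuous_intros)

lemma cylinder_in_borel[measurable]: "cylinder u y R \<in> sets borel"
  unfolding cylinder_def by (intro borel_closed closed_Collect_conj closed_Collect_le continuous_intros)

lemma perp_proj_orthogonal: "norm u = 1 \<Longrightarrow> perp_proj u z \<bullet> u = 0"
  by (simp add: perp_proj_def inner_simps norm_eq_1)

lemma perp_proj_add_scaleR: "norm u = 1 \<Longrightarrow> perp_proj u (z + s *\<^sub>R u) = perp_proj u z"
  by (simp add: perp_proj_def inner_simps norm_eq_1 algebra_simps)

lemma perp_proj_idem: "norm u = 1 \<Longrightarrow> perp_proj u (perp_proj u z) = perp_proj u z"
  by (simp add: perp_proj_def inner_simps norm_eq_1)

lemma perp_proj_add_orthogonal: "y \<bullet> u = 0 \<Longrightarrow> perp_proj u (y + z) = y + perp_proj u z"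
  by (simp add: perp_proj_def inner_simps algebra_simps)

lemma norm_add_scaleR_unit_squared:
  assumes "norm u = 1" "w \<bullet> u = 0"
  shows "norm (w + s *\<^sub>R u) ^ 2 = norm w ^ 2 + s ^ 2"
proof -
  have "norm (w + s *\<^sub>R u) ^ 2 = (w + s *\<^sub>R u) \<bullet> (w + s *\<^sub>R u)"
    by (simp add: power2_norm_eq_inner)
  also have "\<dots> = w \<bullet> w + s^2 * (u \<bullet> u)"
    using assms(2) by (simp add: inner_simps inner_commute power2_eq_square)
  also have "\<dots> = norm w ^ 2 + s^2"
    using assms(1) by (simp add: power2_norm_eq_inner norm_eq_1)
  finally show ?thesis .
qed

lemma norm_add_scaleR_unit_le_iff:
  fixes u :: "'a::euclidean_space"
  assumes u: "norm u = 1" and w: "w \<bullet> u = 0"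
  shows "norm (w + s *\<^sub>R u) \<le> a \<longleftrightarrow> s \<in> {-a..a} \<and> norm w \<le> sqrt (a^2 - s^2)"
proof
  assume h: "norm (w + s *\<^sub>R u) \<le> a"
  then have a: "a \<ge> 0" by (meson norm_ge_zero order_trans)
  have "norm w ^ 2 + s ^ 2 \<le> a^2"
    using norm_add_scaleR_unit_squared[OF u w] h by (metis norm_ge_zero power_mono)
  moreover have "s^2 \<le> a^2"
    using calculation by (metis add_le_same_cancel2 order_trans zero_le_power2 le_add_same_cancel2)
  then have "\<bar>s\<bar> \<le> a" using a by (simp add: power2_le_iff_abs_le)
  ultimately show "s \<in> {-a..a} \<and> norm w \<le> sqrt (a^2 - s^2)"
    by (auto simp: real_le_rsqrt abs_le_iff)
next
  assume h: "s \<in> {-a..a} \<and> norm w \<le> sqrt (a^2 - s^2)"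
  then have a: "a \<ge> 0" by auto
  from h have "\<bar>s\<bar> \<le> a" by auto
  then have "s^2 \<le> a^2" using a by (simp add: power2_le_iff_abs_le)
  then have "norm w ^ 2 \<le> a^2 - s^2"
    using h by (metis diff_ge_0_iff_ge norm_ge_zero power_mono real_sqrt_pow2)
  then have "norm (w + s *\<^sub>R u) ^ 2 \<le> a^2"
    using norm_add_scaleR_unit_squared[OF u w] by simp
  then show "norm (w + s *\<^sub>R u) \<le> a" using a by (simp add: power2_le_iff_abs_le)
qed

lemma norm_perp_proj_le:
  assumes u: "norm u = 1"
  shows "norm (perp_proj u v) \<le> norm v"
proof -
  have "v = perp_proj u v + (v \<bullet> u) *\<^sub>R u" by (simp add: perp_proj_def)
  then have "norm v ^ 2 = norm (perp_proj u v) ^ 2 + (v \<bullet> u)^2"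
    by (metis norm_add_scaleR_unit_squared[OF u perp_proj_orthogonal[OF u]])
  then have "norm (perp_proj u v) ^ 2 \<le> norm v ^ 2" by simp
  then show ?thesis using norm_ge_zero power2_le_imp_le by blast
qed

lemma nn_integral_slab_lines:
  fixes u :: "'a::euclidean_space" and f :: "'a \<Rightarrow> ennreal"
  assumes u: "norm u = 1" and f[measurable]: "f \<in> borel_measurable borel"
  shows "(\<integral>\<^sup>+z. indicator (slab u) z * (\<integral>\<^sup>+s. f (z - s *\<^sub>R u) \<partial>lborel) \<partial>lborel) = (\<integral>\<^sup>+z. f z \<partial>lborel)"
proof -
  have uu: "u \<bullet> u = 1" using u by (simp add: norm_eq_1)
  have translate: "(\<integral>\<^sup>+z. indicator (slab u) z * f (z - s *\<^sub>R u) \<partial>lborel)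
      = (\<integral>\<^sup>+w. indicator (slab u) (s *\<^sub>R u + w) * f w \<partial>lborel)" for s :: real
  proof -
    have "(\<integral>\<^sup>+z. indicator (slab u) z * f (z - s *\<^sub>R u) \<partial>lborel) =
       (\<integral>\<^sup>+z. indicator (slab u) z * f (z - s *\<^sub>R u) \<partial>(distr lborel borel ((+) (s *\<^sub>R u))))"
      by (simp add: lborel_distr_plus)
    also have "\<dots> = (\<integral>\<^sup>+w. indicator (slab u) (s *\<^sub>R u + w) * f w \<partial>lborel)"
      by (subst nn_integral_distr) auto
    finally show ?thesis .
  qed
  have line_through_slab: "(\<integral>\<^sup>+s. indicator (slab u) (s *\<^sub>R u + w) * f w \<partial>(lborel::real measure))
      = f w" for w
  proof -
    have "indicator (slab u) (s *\<^sub>R u + w) = (indicator {- (w \<bullet> u) .. 1 - w \<bullet> u} s :: ennreal)" for s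
      by (auto simp: slab_def indicator_def inner_simps uu)
    then show ?thesis by (simp add: mult.commute nn_integral_cmult_indicator)
  qed
  have "(\<integral>\<^sup>+z. indicator (slab u) z * (\<integral>\<^sup>+s. f (z - s *\<^sub>R u) \<partial>lborel) \<partial>lborel)
     = (\<integral>\<^sup>+z. (\<integral>\<^sup>+s. indicator (slab u) z * f (z - s *\<^sub>R u) \<partial>lborel) \<partial>lborel)"
    by (intro nn_integral_cong) (simp add: nn_integral_cmult)
  also have "\<dots> = (\<integral>\<^sup>+s. (\<integral>\<^sup>+z. indicator (slab u) z * f (z - s *\<^sub>R u) \<partial>lborel) \<partial>(lborel::real measure))"
    by (rule lborel_pair.Fubini'[symmetric]) measurable
  also have "\<dots> = (\<integral>\<^sup>+s. (\<integral>\<^sup>+w. indicator (slab u) (s *\<^sub>R u + w) * f w \<partial>lborel) \<partial>(lborel::real measure))"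
    by (simp add: translate)
  also have "\<dots> = (\<integral>\<^sup>+w. (\<integral>\<^sup>+s. indicator (slab u) (s *\<^sub>R u + w) * f w \<partial>(lborel::real measure)) \<partial>lborel)"
    by (rule lborel_pair.Fubini') measurable
  also have "\<dots> = (\<integral>\<^sup>+w. f w \<partial>lborel)"
    by (simp add: line_through_slab)
  finally show ?thesis .
qed

lemma nn_integral_perp_slices:
  fixes u :: "'a::euclidean_space" and f :: "'a \<Rightarrow> ennreal"
  assumes u: "norm u = 1" and f[measurable]: "f \<in> borel_measurable borel"
  shows "(\<integral>\<^sup>+z. f z \<partial>lborel)
    = (\<integral>\<^sup>+s. (\<integral>\<^sup>+z. indicator (slab u) z * f (perp_proj u z + s *\<^sub>R u) \<partial>lborel) \<partial>(lborel::real measure))"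
proof -
  have reflect: "(\<integral>\<^sup>+s. f (perp_proj u z + s *\<^sub>R u) \<partial>lborel) = (\<integral>\<^sup>+s. f (z - s *\<^sub>R u) \<partial>lborel)" for z
  proof -
    have "(\<integral>\<^sup>+s. f (perp_proj u z + s *\<^sub>R u) \<partial>lborel)
        = (\<integral>\<^sup>+s. f (perp_proj u z + (z \<bullet> u + (-1) * s) *\<^sub>R u) \<partial>lborel)"
      using nn_integral_real_affine[where c="-1" and t="z \<bullet> u" and f="\<lambda>s. f (perp_proj u z + s *\<^sub>R u)"]
      by simp
    also have "(\<lambda>s. perp_proj u z + (z \<bullet> u + (-1) * s) *\<^sub>R u) = (\<lambda>s. z - s *\<^sub>R u)"
      by (auto simp: perp_proj_def algebra_simps)
    finally show ?thesis by simp
  qed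
  have "(\<integral>\<^sup>+s. (\<integral>\<^sup>+z. indicator (slab u) z * f (perp_proj u z + s *\<^sub>R u) \<partial>lborel) \<partial>(lborel::real measure))
     = (\<integral>\<^sup>+z. (\<integral>\<^sup>+s. indicator (slab u) z * f (perp_proj u z + s *\<^sub>R u) \<partial>(lborel::real measure)) \<partial>lborel)"
    by (rule lborel_pair.Fubini') measurable
  also have "\<dots> = (\<integral>\<^sup>+z. indicator (slab u) z * (\<integral>\<^sup>+s. f (z - s *\<^sub>R u) \<partial>lborel) \<partial>lborel)"
    by (intro nn_integral_cong) (simp add: nn_integral_cmult reflect)
  also have "\<dots> = (\<integral>\<^sup>+z. f z \<partial>lborel)"
    by (rule nn_integral_slab_lines[OF u f])
  finally show ?thesis ..
qed

lemma emeasure_lborel_vimage_scaleR: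
  fixes A :: "'a::euclidean_space set"
  assumes c: "c > 0" and A[measurable]: "A \<in> sets borel"
  shows "emeasure lborel A = ennreal (c ^ DIM('a)) * emeasure lborel ((\<lambda>x. c *\<^sub>R x) -` A)"
proof -
  have "emeasure lborel A = emeasure (density (distr lborel borel (\<lambda>x. 0 + c *\<^sub>R x)) (\<lambda>_. \<bar>c\<bar>^DIM('a))) A"
    using lborel_affine[of c "0::'a"] c by simp
  also have "\<dots> = ennreal (\<bar>c\<bar>^DIM('a)) * emeasure (distr lborel borel (\<lambda>x. 0 + c *\<^sub>R x)) A"
    by (simp add: emeasure_density nn_integral_cmult_indicator)
  also have "\<dots> = ennreal (c^DIM('a)) * emeasure lborel ((\<lambda>x. c *\<^sub>R x) -` A)"
    using c by (subst emeasure_distr) auto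
  finally show ?thesis .
qed

lemma emeasure_cylinder_translate:
  assumes u: "norm u = 1" and y: "y \<bullet> u = 0"
  shows "emeasure lborel (cylinder u y R) = emeasure lborel (cylinder u 0 R)"
proof -
  have "emeasure lborel (cylinder u y R) = emeasure (distr lborel borel ((+) y)) (cylinder u y R)"
    by (simp add: lborel_distr_plus)
  also have "\<dots> = emeasure lborel ((+) y -` cylinder u y R \<inter> space lborel)"
    by (rule emeasure_distr) auto
  also have "(+) y -` cylinder u y R \<inter> space lborel = cylinder u 0 R"
    using y by (auto simp: cylinder_def perp_proj_add_orthogonal[OF y] inner_simps)
  finally show ?thesis .
qed

lemma emeasure_cylinder_scale:
  fixes u :: "'a::euclidean_space"
  assumes u: "norm u = 1" and r: "r > 0"
  shows "emeasure lborel (cylinder u 0 r) = ennreal (r ^ (DIM('a) - 1)) * emeasure lborel (cylinder u 0 1)"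
proof -
  \<comment> \<open>The cylinder of radius and height r, measured once by slicing and once as a dilate.\<close>
  define C where "C = {z::'a. norm (perp_proj u z) \<le> r \<and> 0 \<le> z \<bullet> u \<and> z \<bullet> u \<le> r}"
  have C[measurable]: "C \<in> sets borel"
    unfolding C_def by (intro borel_closed closed_Collect_conj closed_Collect_le continuous_intros)
  have slice: "indicator (slab u) z * indicator C (perp_proj u z + s *\<^sub>R u)
      = (indicator (cylinder u 0 r) z * indicator {0..r} s :: ennreal)" for z s
  proof -
    have "perp_proj u (perp_proj u z + s *\<^sub>R u) = perp_proj u z"
      by (simp add: perp_proj_add_scaleR[OF u] perp_proj_idem[OF u])
    moreover have "(perp_proj u z + s *\<^sub>R u) \<bullet> u = s"
      using perp_proj_orthogonal[OF u, of z] u by (simp add: inner_simps norm_eq_1)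
    ultimately have "perp_proj u z + s *\<^sub>R u \<in> C \<longleftrightarrow> norm (perp_proj u z) \<le> r \<and> s \<in> {0..r}"
      by (simp add: C_def)
    then show ?thesis
      by (auto simp: slab_def cylinder_def split: split_indicator)
  qed
  have "emeasure lborel C = (\<integral>\<^sup>+s. emeasure lborel (cylinder u 0 r) * indicator {0..r} s \<partial>lborel)"
    using nn_integral_perp_slices[OF u borel_measurable_indicator[OF C]]
    by (simp add: slice nn_integral_multc)
  also have "\<dots> = emeasure lborel (cylinder u 0 r) * ennreal r"
    using r by (simp add: nn_integral_cmult_indicator)
  finally have by_slices: "emeasure lborel C = ennreal r * emeasure lborel (cylinder u 0 r)"
    by (simp add: mult.commute)
  have "(\<lambda>x. r *\<^sub>R x) -` C = cylinder u 0 1"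
    using r by (auto simp: C_def cylinder_def perp_proj_def algebra_simps inner_simps zero_le_mult_iff
        simp flip: scaleR_diff_right scaleR_scaleR)
  then have by_scaling: "emeasure lborel C = ennreal (r ^ DIM('a)) * emeasure lborel (cylinder u 0 1)"
    using emeasure_lborel_vimage_scaleR[OF r C] by simp
  have "r ^ DIM('a) = r * r ^ (DIM('a) - 1)"
    by (simp flip: power_Suc)
  then have "ennreal r * emeasure lborel (cylinder u 0 r)
      = ennreal r * (ennreal (r ^ (DIM('a) - 1)) * emeasure lborel (cylinder u 0 1))"
    using by_slices by_scaling r by (simp add: ennreal_mult' mult.assoc)
  then show ?thesis
    using r by (simp add: ennreal_mult_cancel_left)
qed

lemma emeasure_cball_perp_slices:
  fixes u :: "'a::euclidean_space"
  assumes u: "norm u = 1"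
  shows "emeasure lborel (cball (0::'a) r)
    = (\<integral>\<^sup>+s. indicator {-r..r} s * emeasure lborel (cylinder u 0 (sqrt (r^2 - s^2))) \<partial>lborel)"
proof -
  have slice: "indicator (slab u) z * indicator (cball 0 r) (perp_proj u z + s *\<^sub>R u)
    = (indicator {-r..r} s * indicator (cylinder u 0 (sqrt (r^2 - s^2))) z :: ennreal)" for z s
  proof -
    have "perp_proj u z + s *\<^sub>R u \<in> cball 0 r \<longleftrightarrow> s \<in> {-r..r} \<and> norm (perp_proj u z) \<le> sqrt (r^2 - s^2)"
      using norm_add_scaleR_unit_le_iff[OF u perp_proj_orthogonal[OF u]] by simp
    then show ?thesis
      by (auto simp: slab_def cylinder_def split: split_indicator)
  qed
  have "emeasure lborel (cball (0::'a) r) = (\<integral>\<^sup>+z. indicator (cball (0::'a) r) z \<partial>lborel)"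
    by simp
  also have "\<dots> = (\<integral>\<^sup>+s. (\<integral>\<^sup>+z. indicator (slab u) z * indicator (cball (0::'a) r) (perp_proj u z + s *\<^sub>R u)
      \<partial>lborel) \<partial>(lborel::real measure))"
    by (rule nn_integral_perp_slices[OF u]) (intro borel_measurable_indicator borel_closed closed_cball)
  also have "\<dots> = (\<integral>\<^sup>+s. indicator {-r..r} s * emeasure lborel (cylinder u 0 (sqrt (r^2 - s^2))) \<partial>lborel)"
    by (simp add: slice nn_integral_cmult)
  finally show ?thesis .
qed

lemma nn_integral_sqrt_one_minus_square_power:
  "(\<integral>\<^sup>+s. indicator {-1..1} s * ennreal (sqrt (1 - s^2) ^ n) \<partial>lborel)
      = ennreal (Beta (1 / 2) (real n / 2 + 1))"
proof -
  have "(\<integral>\<^sup>+s. indicator {-1..1} s * ennreal (sqrt (1 - s^2) ^ n) \<partial>lborel)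
      = (\<integral>\<^sup>+s. ennreal (indicator {-1..1} s * sqrt (1 - s^2) ^ n) \<partial>lborel)"
    by (intro nn_integral_cong) (auto simp: indicator_def)
  then show ?thesis
    using emeasure_cball_aux_integral by simp
qed

lemma emeasure_unit_cylinder:
  fixes u :: "'a::euclidean_space"
  assumes u: "norm u = 1"
  shows "emeasure lborel (cylinder u 0 1) = ennreal (unit_ball_vol (real (DIM('a) - 1)))"
proof -
  define n where "n = DIM('a) - 1"
  define g where "g = emeasure lborel (cylinder u 0 1)"
  define h where "h s = indicator {-1..1} s * ennreal (sqrt (1 - s^2) ^ n)" for s :: real
  \<comment> \<open>Slice the unit ball once into scaled cylinders and once into (d-1)-balls.\<close>
  have "emeasure lborel (cball (0::'a) 1) = (\<integral>\<^sup>+s. g * h s \<partial>lborel)"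
  proof -
    have "indicator {-1..1} s * emeasure lborel (cylinder u 0 (sqrt (1 - s^2))) = g * h s"
      if "s \<notin> {-1, 1}" for s :: real
    proof (cases "s \<in> {-1<..<1}")
      case True
      then have "sqrt (1 - s^2) > 0"
        by (simp add: abs_square_less_1 abs_less_iff)
      from emeasure_cylinder_scale[OF u this] show ?thesis
        using True by (simp add: g_def h_def n_def mult.commute)
    qed (use that in \<open>auto simp: h_def indicator_def\<close>)
    moreover have "AE s in lborel. s \<notin> {-1, 1::real}"
      by (intro AE_not_in countable_imp_null_set_lborel) auto
    ultimately show ?thesis
      unfolding emeasure_cball_perp_slices[OF u] by (intro nn_integral_cong_AE) auto
  qed
  moreover have "emeasure lborel (cball (0::'a) 1) = (\<integral>\<^sup>+s. ennreal (unit_ball_vol (real n)) * h s \<partial>lborel)"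
  proof -
    have "s \<in> {-1..1} \<Longrightarrow> 0 \<le> sqrt (1 - s^2) ^ n" for s :: real
      by (simp add: abs_square_le_1 abs_le_iff)
    then have "indicator {-1..1} s * ball_volume n (sqrt (1 - s^2))
        = ennreal (unit_ball_vol (real n)) * h s" for s
      by (auto simp: h_def ball_volume_def ennreal_mult'' indicator_def)
    then show ?thesis
      using emeasure_cball_slices[of 1, where 'a='a] by (simp add: n_def)
  qed
  ultimately have "ennreal (Beta (1 / 2) (real n / 2 + 1)) * g
      = ennreal (Beta (1 / 2) (real n / 2 + 1)) * ennreal (unit_ball_vol (real n))"
    using nn_integral_sqrt_one_minus_square_power[of n] by (simp add: nn_integral_cmult h_def mult.commute)
  moreover have "Beta (1 / 2) (real n / 2 + 1) > 0"
    unfolding Beta_def by (intro divide_pos_pos mult_pos_pos Gamma_real_pos) auto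
  ultimately show ?thesis
    by (simp add: ennreal_mult_cancel_left g_def n_def)
qed

lemma emeasure_cylinder:
  fixes u :: "'a::euclidean_space"
  assumes u: "norm u = 1" and y: "y \<bullet> u = 0" and r: "r > 0"
  shows "emeasure lborel (cylinder u y r) = ball_volume (DIM('a) - 1) r"
  using emeasure_cylinder_translate[OF u y] emeasure_cylinder_scale[OF u r] emeasure_unit_cylinder[OF u] r
  by (simp add: ball_volume_def ennreal_mult' mult.commute)

section \<open>Chords of balls along parallel lines\<close>

(* For the lines l + R u with l in L, line_mass u L a x is the mass M^P(a, x) of the paper and
   ball_count L y r the count #(L \<inter> B_r(y)). *)
definition chord_length :: "'a::euclidean_space \<Rightarrow> real \<Rightarrow> 'a \<Rightarrow> 'a \<Rightarrow> ennreal" where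
  "chord_length u a x l = (\<integral>\<^sup>+s. indicator (cball x a) (l + s *\<^sub>R u) \<partial>lborel)"

definition line_mass :: "'a::euclidean_space \<Rightarrow> 'a set \<Rightarrow> real \<Rightarrow> 'a \<Rightarrow> ennreal" where
  "line_mass u L a x = (\<integral>\<^sup>+l. chord_length u a x l \<partial>count_space L)"

definition ball_count :: "'a::euclidean_space set \<Rightarrow> 'a \<Rightarrow> real \<Rightarrow> ennreal" where
  "ball_count L y r = emeasure (count_space UNIV) (L \<inter> cball y r)"

lemma borel_measurable_indicator_cball_line[measurable]:
  fixes u :: "'a::euclidean_space"
  shows "(\<lambda>s::real. indicator (cball x a) (l + s *\<^sub>R u) :: ennreal) \<in> borel_measurable borel"
proof -
  have "(\<lambda>s. indicator (cball x a) (l + s *\<^sub>R u) :: ennreal) = indicator {s. dist x (l + s *\<^sub>R u) \<le> a}"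
    by (auto simp: fun_eq_iff indicator_def)
  also have "\<dots> \<in> borel_measurable borel"
    by (intro borel_measurable_indicator borel_closed closed_Collect_le continuous_intros)
  finally show ?thesis .
qed

lemma ball_count_eq_nn_integral:
  "ball_count L y r = (\<integral>\<^sup>+l. indicator (cball y r) l \<partial>count_space L)"
proof -
  have "(\<integral>\<^sup>+l. indicator (cball y r) l \<partial>count_space L) = (\<integral>\<^sup>+l. indicator (cball y r \<inter> L) l \<partial>count_space L)"
    by (intro nn_integral_cong) (auto simp: indicator_def)
  also have "\<dots> = emeasure (count_space L) (cball y r \<inter> L)"
    by (rule nn_integral_indicator) auto
  finally show ?thesis
    by (simp add: ball_count_def emeasure_count_space Int_commute)
qed

lemma chord_length_slices:
  fixes u :: "'a::euclidean_space"
  assumes u: "norm u = 1" and l: "l \<bullet> u = 0"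
  shows "chord_length u a x l
    = (\<integral>\<^sup>+s. indicator {-a..a} s * indicator (cball (perp_proj u x) (sqrt (a^2 - s^2))) l \<partial>lborel)"
proof -
  have "chord_length u a x l = (\<integral>\<^sup>+s. indicator (cball x a) (l + (x \<bullet> u + 1 * s) *\<^sub>R u) \<partial>lborel)"
    using nn_integral_real_affine[where c=1 and t="x \<bullet> u" and f="\<lambda>s. indicator (cball x a) (l + s *\<^sub>R u)"]
    by (simp add: chord_length_def)
  also have "\<dots> = (\<integral>\<^sup>+s. indicator {-a..a} s *
      indicator (cball (perp_proj u x) (sqrt (a^2 - s^2))) l \<partial>lborel)"
  proof (intro nn_integral_cong)
    fix s :: real
    have w: "(l - perp_proj u x) \<bullet> u = 0"
      using l perp_proj_orthogonal[OF u, of x] by (simp add: inner_simps)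
    have "dist x (l + (x \<bullet> u + 1 * s) *\<^sub>R u) = norm ((l - perp_proj u x) + s *\<^sub>R u)"
      by (simp add: dist_norm perp_proj_def algebra_simps norm_minus_commute)
    then have "l + (x \<bullet> u + 1 * s) *\<^sub>R u \<in> cball x a
        \<longleftrightarrow> s \<in> {-a..a} \<and> l \<in> cball (perp_proj u x) (sqrt (a^2 - s^2))"
      using norm_add_scaleR_unit_le_iff[OF u w, of s a] by (simp add: dist_norm norm_minus_commute)
    then show "indicator (cball x a) (l + (x \<bullet> u + 1 * s) *\<^sub>R u)
        = (indicator {-a..a} s * indicator (cball (perp_proj u x) (sqrt (a^2 - s^2))) l :: ennreal)"
      by (simp split: split_indicator)
  qed
  finally show ?thesis .
qed

lemma chord_length_eq_translate:
  "chord_length u r z l = (\<integral>\<^sup>+s. indicator (cball l r) (z - s *\<^sub>R u) \<partial>lborel)"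
  unfolding chord_length_def
  by (intro nn_integral_cong) (auto simp: indicator_def dist_norm algebra_simps norm_minus_commute)

lemma borel_measurable_chord_length[measurable]:
  "(\<lambda>z. chord_length u r z l) \<in> borel_measurable (lborel::'a::euclidean_space measure)"
proof -
  have [measurable]: "indicator (cball l r) \<in> (borel_measurable borel :: ('a \<Rightarrow> ennreal) set)"
    by (intro borel_measurable_indicator borel_closed closed_cball)
  show ?thesis
    unfolding chord_length_eq_translate by (rule lborel.borel_measurable_nn_integral) measurable
qed

lemma chord_length_eq_0:
  fixes u :: "'a::euclidean_space"
  assumes u: "norm u = 1" and l: "l \<bullet> u = 0" and far: "r < dist (perp_proj u z) l"
  shows "chord_length u r z l = 0"
proof -
  have "indicator (cball l r) (z - s *\<^sub>R u) = (0::ennreal)" for s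
  proof -
    have "perp_proj u (z - s *\<^sub>R u - l) = perp_proj u z - l"
      using l u by (simp add: perp_proj_def inner_simps algebra_simps norm_eq_1)
    then have "norm (perp_proj u z - l) \<le> norm (z - s *\<^sub>R u - l)"
      by (metis norm_perp_proj_le[OF u])
    then show ?thesis
      using far by (simp add: indicator_def dist_norm norm_minus_commute)
  qed
  then show ?thesis
    by (simp add: chord_length_eq_translate)
qed

lemma nn_integral_slab_chord_length:
  fixes u :: "'a::euclidean_space"
  assumes u: "norm u = 1"
  shows "(\<integral>\<^sup>+z. indicator (slab u) z * chord_length u r z l \<partial>lborel) = emeasure lborel (cball (0::'a) r)"
proof -
  have "(\<integral>\<^sup>+z. indicator (slab u) z * chord_length u r z l \<partial>lborel)
      = (\<integral>\<^sup>+z. indicator (cball l r) z \<partial>lborel)"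
    unfolding chord_length_eq_translate
    by (rule nn_integral_slab_lines[OF u]) (intro borel_measurable_indicator borel_closed closed_cball)
  also have "\<dots> = emeasure lborel (cball (0::'a) r)"
    by (cases "r \<ge> 0") (simp_all add: emeasure_cball)
  finally show ?thesis .
qed

lemma nn_integral_cylinder_chord_length_le:
  fixes u :: "'a::euclidean_space"
  assumes u: "norm u = 1" and l: "l \<bullet> u = 0"
  shows "(\<integral>\<^sup>+z. indicator (cylinder u y R) z * chord_length u r z l \<partial>lborel)
    \<le> indicator (cball y (R + r)) l * emeasure lborel (cball (0::'a) r)"
proof -
  have "indicator (cylinder u y R) z * chord_length u r z l
      \<le> indicator (cball y (R + r)) l * (indicator (slab u) z * chord_length u r z l)" for z
  proof (cases "z \<in> cylinder u y R \<and> chord_length u r z l \<noteq> 0")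
    case True
    then have "dist y (perp_proj u z) \<le> R" "dist (perp_proj u z) l \<le> r"
      using chord_length_eq_0[OF u l] by (force simp: cylinder_def dist_norm norm_minus_commute)+
    then have "l \<in> cball y (R + r)"
      using dist_triangle[of y l "perp_proj u z"] by simp
    then show ?thesis
      using True by (simp add: cylinder_def slab_def indicator_def)
  qed (auto simp: indicator_def)
  then have "(\<integral>\<^sup>+z. indicator (cylinder u y R) z * chord_length u r z l \<partial>lborel)
      \<le> (\<integral>\<^sup>+z. indicator (cball y (R + r)) l * (indicator (slab u) z * chord_length u r z l) \<partial>lborel)"
    by (intro nn_integral_mono)
  also have "\<dots> = indicator (cball y (R + r)) l * emeasure lborel (cball (0::'a) r)"
    by (simp add: nn_integral_cmult nn_integral_slab_chord_length[OF u])
  finally show ?thesis .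
qed

lemma nn_integral_cylinder_chord_length_ge:
  fixes u :: "'a::euclidean_space"
  assumes u: "norm u = 1" and l: "l \<bullet> u = 0"
  shows "indicator (cball y (R - r)) l * emeasure lborel (cball (0::'a) r)
    \<le> (\<integral>\<^sup>+z. indicator (cylinder u y R) z * chord_length u r z l \<partial>lborel)"
proof -
  have "indicator (cball y (R - r)) l * (indicator (slab u) z * chord_length u r z l)
      \<le> indicator (cylinder u y R) z * chord_length u r z l" for z
  proof (cases "l \<in> cball y (R - r) \<and> z \<in> slab u \<and> chord_length u r z l \<noteq> 0")
    case True
    then have "dist y l \<le> R - r" "dist (perp_proj u z) l \<le> r"
      using chord_length_eq_0[OF u l] by (force simp: dist_norm)+
    then have "dist (perp_proj u z) y \<le> R"
      using dist_triangle[of "perp_proj u z" y l] by (simp add: dist_commute)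
    then show ?thesis
      using True by (simp add: cylinder_def slab_def indicator_def dist_norm)
  qed (auto simp: indicator_def)
  then have "(\<integral>\<^sup>+z. indicator (cball y (R - r)) l * (indicator (slab u) z * chord_length u r z l) \<partial>lborel)
      \<le> (\<integral>\<^sup>+z. indicator (cylinder u y R) z * chord_length u r z l \<partial>lborel)"
    by (intro nn_integral_mono)
  then show ?thesis
    by (simp add: nn_integral_cmult nn_integral_slab_chord_length[OF u])
qed

lemma ball_count_mono: "r \<le> r' \<Longrightarrow> ball_count L y r \<le> ball_count L y r'"
  unfolding ball_count_def by (intro emeasure_mono) auto

context
  fixes u :: "'a::euclidean_space" and L :: "'a set"
  assumes u: "norm u = 1" and L_countable: "countable L" and L_perp: "\<And>l. l \<in> L \<Longrightarrow> l \<bullet> u = 0"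
begin

lemma line_mass_slices:
  "line_mass u L a x =
      (\<integral>\<^sup>+s. indicator {-a..a} s * ball_count L (perp_proj u x) (sqrt (a^2 - s^2)) \<partial>lborel)"
proof -
  have [measurable]: "(\<lambda>s. indicator {-a..a} s
      * indicator (cball (perp_proj u x) (sqrt (a^2 - s^2))) l :: ennreal)
      \<in> borel_measurable borel" for l
  proof -
    have "(\<lambda>s. indicator {-a..a} s * indicator (cball (perp_proj u x) (sqrt (a^2 - s^2))) l :: ennreal)
        = indicator {s. -a \<le> s \<and> s \<le> a \<and> dist (perp_proj u x) l \<le> sqrt (a^2 - s^2)}"
      by (auto simp: indicator_def fun_eq_iff)
    also have "\<dots> \<in> borel_measurable borel"
      by (intro borel_measurable_indicator borel_closed closed_Collect_conj
        closed_Collect_le continuous_intros)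
    finally show ?thesis .
  qed
  have "line_mass u L a x = (\<integral>\<^sup>+l.
      (\<integral>\<^sup>+s. indicator {-a..a} s * indicator (cball (perp_proj u x) (sqrt (a^2 - s^2))) l
      \<partial>lborel) \<partial>count_space L)"
    unfolding line_mass_def by (intro nn_integral_cong) (simp add: chord_length_slices[OF u L_perp])
  also have "\<dots> = (\<integral>\<^sup>+s. (\<integral>\<^sup>+l. indicator {-a..a} s * indicator (cball (perp_proj u x) (sqrt (a^2 - s^2))) l
      \<partial>count_space L) \<partial>lborel)"
    by (rule nn_integral_count_space_nn_integral[symmetric, OF L_countable]) simp
  also have "\<dots> = (\<integral>\<^sup>+s. indicator {-a..a} s * ball_count L (perp_proj u x) (sqrt (a^2 - s^2)) \<partial>lborel)"
    by (simp add: nn_integral_cmult ball_count_eq_nn_integral)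
  finally show ?thesis .
qed

lemma nn_integral_cylinder_line_mass_le:
  "(\<integral>\<^sup>+z. indicator (cylinder u y R) z * line_mass u L r z \<partial>lborel)
    \<le> ball_count L y (R + r) * emeasure lborel (cball (0::'a) r)"
proof -
  have "(\<integral>\<^sup>+z. indicator (cylinder u y R) z * line_mass u L r z \<partial>lborel)
      = (\<integral>\<^sup>+l. (\<integral>\<^sup>+z. indicator (cylinder u y R) z * chord_length u r z l \<partial>lborel) \<partial>count_space L)"
    unfolding line_mass_def nn_integral_cmult[symmetric, OF borel_measurable_count_space]
    by (rule nn_integral_count_space_nn_integral[OF L_countable]) measurable
  also have "\<dots> \<le> (\<integral>\<^sup>+l. indicator (cball y (R + r)) l * emeasure lborel (cball (0::'a) r) \<partial>count_space L)"
    by (intro nn_integral_mono nn_integral_cylinder_chord_length_le[OF u L_perp]) simp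
  also have "\<dots> = ball_count L y (R + r) * emeasure lborel (cball (0::'a) r)"
    unfolding ball_count_eq_nn_integral by (rule nn_integral_multc) simp
  finally show ?thesis .
qed

lemma nn_integral_cylinder_line_mass_ge:
  "ball_count L y (R - r) * emeasure lborel (cball (0::'a) r)
    \<le> (\<integral>\<^sup>+z. indicator (cylinder u y R) z * line_mass u L r z \<partial>lborel)"
proof -
  have "ball_count L y (R - r) * emeasure lborel (cball (0::'a) r)
      = (\<integral>\<^sup>+l. indicator (cball y (R - r)) l * emeasure lborel (cball (0::'a) r) \<partial>count_space L)"
    unfolding ball_count_eq_nn_integral by (rule nn_integral_multc[symmetric]) simp
  also have "\<dots> \<le> (\<integral>\<^sup>+l. (\<integral>\<^sup>+z. indicator (cylinder u y R) z * chord_length u r z l \<partial>lborel) \<partial>count_space L)"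
    by (intro nn_integral_mono nn_integral_cylinder_chord_length_ge[OF u L_perp]) simp
  also have "\<dots> = (\<integral>\<^sup>+z. indicator (cylinder u y R) z * line_mass u L r z \<partial>lborel)"
    unfolding line_mass_def nn_integral_cmult[symmetric, OF borel_measurable_count_space]
    by (rule nn_integral_count_space_nn_integral[symmetric, OF L_countable]) measurable
  finally show ?thesis .
qed

lemma ball_count_ge_of_line_mass_ge:
  assumes r: "r > 0" and R: "R > 0" and y: "y \<bullet> u = 0"
    and mass: "\<And>z. m * emeasure lborel (cball (0::'a) r) \<le> line_mass u L r z"
  shows "m * ball_volume (DIM('a) - 1) R \<le> ball_count L y (R + r)"
proof -
  have "m * emeasure lborel (cball (0::'a) r) * ball_volume (DIM('a) - 1) R
      = (\<integral>\<^sup>+z. m * emeasure lborel (cball (0::'a) r) * indicator (cylinder u y R) z \<partial>lborel)"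
    by (subst nn_integral_cmult_indicator) (simp_all add: emeasure_cylinder[OF u y R] cylinder_in_borel)
  also have "\<dots> \<le> (\<integral>\<^sup>+z. indicator (cylinder u y R) z * line_mass u L r z \<partial>lborel)"
    by (intro nn_integral_mono) (simp add: mass split: split_indicator)
  also have "\<dots> \<le> ball_count L y (R + r) * emeasure lborel (cball (0::'a) r)"
    by (rule nn_integral_cylinder_line_mass_le)
  finally have "emeasure lborel (cball (0::'a) r) * (m * ball_volume (DIM('a) - 1) R)
      \<le> emeasure lborel (cball (0::'a) r) * ball_count L y (R + r)"
    by (simp add: mult_ac)
  then show ?thesis
    using r by (simp add: ennreal_mult_le_mult_iff)
qed

lemma ball_count_le_of_line_mass_le:
  assumes r: "r > 0" and R: "R > 0" and y: "y \<bullet> u = 0"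
    and mass: "\<And>z. line_mass u L r z \<le> m * emeasure lborel (cball (0::'a) r)"
  shows "ball_count L y (R - r) \<le> m * ball_volume (DIM('a) - 1) R"
proof -
  have "ball_count L y (R - r) * emeasure lborel (cball (0::'a) r)
      \<le> (\<integral>\<^sup>+z. indicator (cylinder u y R) z * line_mass u L r z \<partial>lborel)"
    by (rule nn_integral_cylinder_line_mass_ge)
  also have "\<dots> \<le> (\<integral>\<^sup>+z. m * emeasure lborel (cball (0::'a) r) * indicator (cylinder u y R) z \<partial>lborel)"
    by (intro nn_integral_mono) (simp add: mass split: split_indicator)
  also have "\<dots> = m * emeasure lborel (cball (0::'a) r) * ball_volume (DIM('a) - 1) R"
    by (subst nn_integral_cmult_indicator) (simp_all add: emeasure_cylinder[OF u y R] cylinder_in_borel)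
  finally have "emeasure lborel (cball (0::'a) r) * ball_count L y (R - r)
      \<le> emeasure lborel (cball (0::'a) r) * (m * ball_volume (DIM('a) - 1) R)"
    by (simp add: mult_ac)
  then show ?thesis
    using r by (simp add: ennreal_mult_le_mult_iff)
qed

lemma INF_ball_count_density_ge:
  assumes r: "r > 0" and rho: "\<rho> > r"
  shows "(INF x. line_mass u L r x / emeasure lborel (cball (0::'a) r))
      * ennreal (((\<rho> - r) / \<rho>) ^ (DIM('a) - 1))
     \<le> (INF y\<in>{y. y \<bullet> u = 0}. ball_count L y \<rho> / ball_volume (DIM('a) - 1) \<rho>)"
    (is "?m * _ \<le> _")
proof (rule INF_greatest)
  fix y assume "y \<in> {y. y \<bullet> u = 0}"
  have "?m * emeasure lborel (cball (0::'a) r) \<le> line_mass u L r z" for z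
  proof -
    have "?m \<le> line_mass u L r z / emeasure lborel (cball (0::'a) r)"
      by (rule INF_lower) simp
    then show ?thesis
      using r by (simp add: ennreal_le_divide_iff)
  qed
  then have "?m * ball_volume (DIM('a) - 1) (\<rho> - r) \<le> ball_count L y \<rho>"
    using ball_count_ge_of_line_mass_ge[OF r _ _, of "\<rho> - r" y ?m] rho \<open>y \<in> _\<close> by simp
  moreover have "ball_volume (DIM('a) - 1) (\<rho> - r)
      = ennreal (((\<rho> - r) / \<rho>) ^ (DIM('a) - 1)) * ball_volume (DIM('a) - 1) \<rho>"
    using ball_volume_scale[of \<rho> "\<rho> - r"] r rho by simp
  ultimately show "?m * ennreal (((\<rho> - r) / \<rho>) ^ (DIM('a) - 1))
      \<le> ball_count L y \<rho> / ball_volume (DIM('a) - 1) \<rho>"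
    using r rho by (simp add: ennreal_le_divide_iff mult.assoc)
qed

lemma SUP_ball_count_density_le:
  assumes r: "r > 0" and rho: "\<rho> > 0"
  shows "(SUP y\<in>{y. y \<bullet> u = 0}. ball_count L y \<rho> / ball_volume (DIM('a) - 1) \<rho>)
     \<le> (SUP x. line_mass u L r x / emeasure lborel (cball (0::'a) r))
       * ennreal (((\<rho> + r) / \<rho>) ^ (DIM('a) - 1))"
    (is "_ \<le> ?m * _")
proof (rule SUP_least)
  fix y assume "y \<in> {y. y \<bullet> u = 0}"
  have "line_mass u L r z \<le> ?m * emeasure lborel (cball (0::'a) r)" for z
  proof -
    have "line_mass u L r z / emeasure lborel (cball (0::'a) r) \<le> ?m"
      by (rule SUP_upper) simp
    then show ?thesis
      using r by (simp add: ennreal_divide_le_iff)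
  qed
  then have "ball_count L y \<rho> \<le> ?m * ball_volume (DIM('a) - 1) (\<rho> + r)"
    using ball_count_le_of_line_mass_le[OF r _ _, of "\<rho> + r" y ?m] rho r \<open>y \<in> _\<close> by simp
  moreover have "ball_volume (DIM('a) - 1) (\<rho> + r)
      = ennreal (((\<rho> + r) / \<rho>) ^ (DIM('a) - 1)) * ball_volume (DIM('a) - 1) \<rho>"
    using ball_volume_scale[of \<rho> "\<rho> + r"] r rho by simp
  ultimately show "ball_count L y \<rho> / ball_volume (DIM('a) - 1) \<rho>
      \<le> ?m * ennreal (((\<rho> + r) / \<rho>) ^ (DIM('a) - 1))"
    using r rho by (simp add: ennreal_divide_le_iff mult.assoc)
qed

lemma INF_line_mass_density_ge:
  assumes R: "R > 0" and a: "a > R"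
    and bound: "\<And>\<rho> y. \<rho> \<ge> R \<Longrightarrow> y \<bullet> u = 0 \<Longrightarrow> c * ball_volume (DIM('a) - 1) \<rho> \<le> ball_count L y \<rho>"
  shows "c * ennreal ((sqrt (a^2 - R^2) / a) ^ DIM('a))
      \<le> (INF x. line_mass u L a x / emeasure lborel (cball (0::'a) a))"
proof (rule INF_greatest)
  fix x :: 'a
  define b where "b = sqrt (a^2 - R^2)"
  have "a^2 - R^2 > 0"
    using R a by (simp add: power_strict_mono)
  then have b: "b > 0" and b2: "b^2 = a^2 - R^2"
    by (simp_all add: b_def)
  have ba: "b \<le> a"
    unfolding b_def using a R real_sqrt_le_mono[of "a^2 - R^2" "a^2"] by simp
  have slice: "c * (indicator {-b..b} s * ball_volume (DIM('a) - 1) (sqrt (b^2 - s^2)))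
      \<le> indicator {-a..a} s * ball_count L (perp_proj u x) (sqrt (a^2 - s^2))" for s
  proof (cases "s \<in> {-b..b}")
    case True
    then have "s^2 \<le> b^2"
      using b by (auto simp: power2_le_iff_abs_le abs_le_iff)
    then have "sqrt (b^2 - s^2) \<le> sqrt (a^2 - s^2)" "R \<le> sqrt (a^2 - s^2)"
      using b2 R by (auto simp: real_le_rsqrt)
    then have "c * ball_volume (DIM('a) - 1) (sqrt (b^2 - s^2))
        \<le> ball_count L (perp_proj u x) (sqrt (a^2 - s^2))"
      using ball_volume_mono[of "sqrt (b^2 - s^2)"] bound[OF _ perp_proj_orthogonal[OF u]] \<open>s^2 \<le> b^2\<close>
      by (meson mult_left_mono order_trans real_sqrt_ge_zero diff_ge_0_iff_ge zero_le)
    then show ?thesis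
      using True ba by (simp add: indicator_def)
  qed (auto simp: indicator_def)
  have "c * ennreal ((b / a) ^ DIM('a)) * emeasure lborel (cball (0::'a) a)
      = c * emeasure lborel (cball (0::'a) b)"
    using emeasure_cball_scale[of a b, where 'a='a] a b R by (simp add: mult.assoc)
  also have "\<dots> = (\<integral>\<^sup>+s. c * (indicator {-b..b} s * ball_volume (DIM('a) - 1) (sqrt (b^2 - s^2))) \<partial>lborel)"
    using emeasure_cball_slices[OF b, where 'a='a] by (subst nn_integral_cmult) simp_all
  also have "\<dots> \<le> line_mass u L a x"
    unfolding line_mass_slices by (intro nn_integral_mono slice)
  finally show "c * ennreal ((sqrt (a^2 - R^2) / a) ^ DIM('a))
      \<le> line_mass u L a x / emeasure lborel (cball (0::'a) a)"
    unfolding b_def[symmetric] using a R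
    by (simp add: ennreal_le_divide_iff)
qed

lemma SUP_line_mass_density_le:
  assumes R: "R > 0" and a: "a > 0"
    and bound: "\<And>\<rho> y. \<rho> \<ge> R \<Longrightarrow> y \<bullet> u = 0 \<Longrightarrow> ball_count L y \<rho> \<le> c * ball_volume (DIM('a) - 1) \<rho>"
  shows "(SUP x. line_mass u L a x / emeasure lborel (cball (0::'a) a))
      \<le> c * ennreal ((sqrt (a^2 + R^2) / a) ^ DIM('a))"
proof (rule SUP_least)
  fix x :: 'a
  define b where "b = sqrt (a^2 + R^2)"
  have b: "b > 0" and b2: "b^2 = a^2 + R^2" and ab: "a \<le> b"
    using a by (auto simp: b_def add_pos_nonneg real_le_rsqrt)
  have slice: "indicator {-a..a} s * ball_count L (perp_proj u x) (sqrt (a^2 - s^2))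
      \<le> c * (indicator {-b..b} s * ball_volume (DIM('a) - 1) (sqrt (b^2 - s^2)))" for s
  proof (cases "s \<in> {-a..a}")
    case True
    then have "s^2 \<le> a^2"
      using a by (auto simp: power2_le_iff_abs_le abs_le_iff)
    then have "sqrt (a^2 - s^2) \<le> sqrt (b^2 - s^2)" "R \<le> sqrt (b^2 - s^2)"
      using b2 R by (auto simp: real_le_rsqrt)
    then have "ball_count L (perp_proj u x) (sqrt (a^2 - s^2))
        \<le> c * ball_volume (DIM('a) - 1) (sqrt (b^2 - s^2))"
      using ball_count_mono bound[OF _ perp_proj_orthogonal[OF u]] order_trans by blast
    then show ?thesis
      using True ab by (simp add: indicator_def)
  qed (auto simp: indicator_def)
  have "line_mass u L a x \<le>
      (\<integral>\<^sup>+s. c * (indicator {-b..b} s * ball_volume (DIM('a) - 1) (sqrt (b^2 - s^2))) \<partial>lborel)"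
    unfolding line_mass_slices by (intro nn_integral_mono slice)
  also have "\<dots> = c * emeasure lborel (cball (0::'a) b)"
    using emeasure_cball_slices[OF b, where 'a='a] by (subst nn_integral_cmult) simp_all
  also have "\<dots> = c * ennreal ((b / a) ^ DIM('a)) * emeasure lborel (cball (0::'a) a)"
    using emeasure_cball_scale[of a b, where 'a='a] a b by (simp add: mult.assoc)
  finally show "line_mass u L a x / emeasure lborel (cball (0::'a) a)
      \<le> c * ennreal ((sqrt (a^2 + R^2) / a) ^ DIM('a))"
    unfolding b_def[symmetric] using a
    by (simp add: ennreal_divide_le_iff)
qed

lemma Liminf_line_mass_density_eq:
  "Liminf at_top (\<lambda>a. INF x. line_mass u L a x / emeasure lborel (cball (0::'a) a))
   = Liminf at_top (\<lambda>\<rho>. INF y\<in>{y. y \<bullet> u = 0}. ball_count L y \<rho> / ball_volume (DIM('a) - 1) \<rho>)"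
  (is "Liminf at_top ?m = Liminf at_top ?n")
proof (rule antisym)
  have key: "?m r \<le> Liminf at_top ?n" if r: "r > 0" for r
  proof (rule le_Liminf_scaled_lower_bound)
    show "((\<lambda>\<rho>. (\<rho> - r) / \<rho>) \<longlongrightarrow> 1) at_top"
      by real_asymp
    show "\<forall>\<^sub>F \<rho> in at_top. ?m r * ennreal (((\<rho> - r) / \<rho>) ^ (DIM('a) - 1)) \<le> ?n \<rho>"
      using eventually_gt_at_top[of r] by eventually_elim (rule INF_ball_count_density_ge[OF r])
  qed
  have "\<forall>\<^sub>F r in at_top. ?m r \<le> Liminf at_top ?n"
    using eventually_gt_at_top[of 0] by eventually_elim (rule key)
  then show "Liminf at_top ?m \<le> Liminf at_top ?n"
    by (intro Liminf_le) auto
next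
  show "Liminf at_top ?n \<le> Liminf at_top ?m"
  proof (rule dense_le)
    fix c assume c: "c < Liminf at_top ?n"
    have "\<forall>\<^sub>F \<rho> in at_top. c < ?n \<rho>"
      using le_Liminf_iff[THEN iffD1, OF order_refl] c by blast
    then obtain R0 where R0: "\<And>\<rho>. \<rho> \<ge> R0 \<Longrightarrow> c < ?n \<rho>"
      by (auto simp: eventually_at_top_linorder)
    define R where "R = max R0 1"
    have R: "R > 0"
      by (simp add: R_def)
    have bound: "c * ball_volume (DIM('a) - 1) \<rho> \<le> ball_count L y \<rho>" if "\<rho> \<ge> R" "y \<bullet> u = 0" for \<rho> y
    proof -
      have "c < ?n \<rho>"
        using R0 that unfolding R_def by auto
      also have "?n \<rho> \<le> ball_count L y \<rho> / ball_volume (DIM('a) - 1) \<rho>"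
        by (rule INF_lower) (use that in simp)
      finally have "c \<le> ball_count L y \<rho> / ball_volume (DIM('a) - 1) \<rho>"
        by simp
      then show ?thesis
        using that R by (simp add: ennreal_le_divide_iff)
    qed
    show "c \<le> Liminf at_top ?m"
    proof (rule le_Liminf_scaled_lower_bound)
      show "((\<lambda>a. sqrt (a^2 - R^2) / a) \<longlongrightarrow> 1) at_top"
        by real_asymp
      show "\<forall>\<^sub>F a in at_top. c * ennreal ((sqrt (a^2 - R^2) / a) ^ DIM('a)) \<le> ?m a"
        using eventually_gt_at_top[of R] by eventually_elim (rule INF_line_mass_density_ge[OF R _ bound])
    qed
  qed
qed

lemma Limsup_line_mass_density_eq:
  "Limsup at_top (\<lambda>a. SUP x. line_mass u L a x / emeasure lborel (cball (0::'a) a))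
   = Limsup at_top (\<lambda>\<rho>. SUP y\<in>{y. y \<bullet> u = 0}. ball_count L y \<rho> / ball_volume (DIM('a) - 1) \<rho>)"
  (is "Limsup at_top ?m = Limsup at_top ?n")
proof (rule antisym)
  show "Limsup at_top ?m \<le> Limsup at_top ?n"
  proof (rule dense_ge)
    fix c assume c: "Limsup at_top ?n < c"
    have "\<forall>\<^sub>F \<rho> in at_top. ?n \<rho> < c"
      using Limsup_le_iff[THEN iffD1, OF order_refl] c by blast
    then obtain R0 where R0: "\<And>\<rho>. \<rho> \<ge> R0 \<Longrightarrow> ?n \<rho> < c"
      by (auto simp: eventually_at_top_linorder)
    define R where "R = max R0 1"
    have R: "R > 0"
      by (simp add: R_def)
    have bound: "ball_count L y \<rho> \<le> c * ball_volume (DIM('a) - 1) \<rho>" if "\<rho> \<ge> R" "y \<bullet> u = 0" for \<rho> y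
    proof -
      have "ball_count L y \<rho> / ball_volume (DIM('a) - 1) \<rho> \<le> ?n \<rho>"
        by (rule SUP_upper) (use that in simp)
      also have "?n \<rho> < c"
        using R0 that unfolding R_def by auto
      finally have "ball_count L y \<rho> / ball_volume (DIM('a) - 1) \<rho> \<le> c"
        by simp
      then show ?thesis
        using that R by (simp add: ennreal_divide_le_iff)
    qed
    show "Limsup at_top ?m \<le> c"
    proof (rule Limsup_le_scaled_upper_bound)
      show "((\<lambda>a. sqrt (a^2 + R^2) / a) \<longlongrightarrow> 1) at_top"
        by real_asymp
      show "\<forall>\<^sub>F a in at_top. ?m a \<le> c * ennreal ((sqrt (a^2 + R^2) / a) ^ DIM('a))"
        using eventually_gt_at_top[of 0] by eventually_elim (rule SUP_line_mass_density_le[OF R _ bound])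
    qed
  qed
next
  have key: "Limsup at_top ?n \<le> ?m r" if r: "r > 0" for r
  proof (rule Limsup_le_scaled_upper_bound)
    show "((\<lambda>\<rho>. (\<rho> + r) / \<rho>) \<longlongrightarrow> 1) at_top"
      by real_asymp
    show "\<forall>\<^sub>F \<rho> in at_top. ?n \<rho> \<le> ?m r * ennreal (((\<rho> + r) / \<rho>) ^ (DIM('a) - 1))"
      using eventually_gt_at_top[of 0] by eventually_elim (rule SUP_ball_count_density_le[OF r])
  qed
  have "\<forall>\<^sub>F r in at_top. Limsup at_top ?n \<le> ?m r"
    using eventually_gt_at_top[of 0] by eventually_elim (rule key)
  then show "Limsup at_top ?n \<le> Limsup at_top ?m"
    by (intro le_Limsup) auto
qed

end

section \<open>Lines parallel to a vector\<close>

lemma perp_eq_unit: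
  assumes "q \<noteq> 0"
  shows "perp q = {y. y \<bullet> (q /\<^sub>R norm q) = 0}"
  using assms by (auto simp: perp_def inner_simps)

lemma line_curve_unit:
  assumes "q \<noteq> 0"
  shows "line_curve q b t = b + (t * norm q) *\<^sub>R (q /\<^sub>R norm q)"
  using assms by (simp add: line_curve_def)

lemma range_line_curve:
  assumes q: "q \<noteq> 0"
  defines "u \<equiv> q /\<^sub>R norm q"
  shows "range (line_curve q b) = {z. perp_proj u z = perp_proj u b}"
proof (intro equalityI subsetI)
  have u: "norm u = 1"
    using q by (simp add: u_def)
  fix z
  show "z \<in> range (line_curve q b) \<Longrightarrow> z \<in> {z. perp_proj u z = perp_proj u b}"
    by (auto simp: line_curve_unit[OF q] u_def[symmetric] perp_proj_add_scaleR[OF u])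
  assume "z \<in> {z. perp_proj u z = perp_proj u b}"
  then have "z = b + (z \<bullet> u - b \<bullet> u) *\<^sub>R u"
    by (simp add: perp_proj_def algebra_simps)
  also have "\<dots> = line_curve q b ((z \<bullet> u - b \<bullet> u) / norm q)"
    using q by (simp add: line_curve_unit u_def[symmetric])
  finally show "z \<in> range (line_curve q b)"
    by (rule range_eqI)
qed

lemma traj_union_line_curves_inter_perp:
  assumes q: "q \<noteq> 0"
  defines "u \<equiv> q /\<^sub>R norm q"
  shows "traj_union (line_curve q ` B) \<inter> perp q = perp_proj u ` B"
proof -
  have u: "norm u = 1"
    using q by (simp add: u_def)
  have "range (line_curve q b) \<inter> perp q = {perp_proj u b}" for b
    using perp_proj_idem[OF u] perp_proj_orthogonal[OF u]
    by (auto simp: range_line_curve[OF q] perp_eq_unit[OF q] u_def[symmetric] perp_proj_def)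
  moreover have "traj_union (line_curve q ` B) \<inter> perp q = (\<Union>b\<in>B. range (line_curve q b) \<inter> perp q)"
    unfolding traj_union_def by auto
  ultimately show ?thesis
    by auto
qed

lemma arc_length_line_curve:
  assumes q: "q \<noteq> 0"
  defines "u \<equiv> q /\<^sub>R norm q"
  shows "arc_length_in (line_curve q b) (cball x a) = chord_length u a x (perp_proj u b)"
proof -
  have "vector_derivative (line_curve q b) (at t) = q" for t
    unfolding line_curve_def by (rule vector_derivative_at) (auto intro!: derivative_eq_intros)
  then have "arc_length_in (line_curve q b) (cball x a)
      = (\<integral>\<^sup>+t. ennreal (norm q) * indicator (cball x a) (line_curve q b t) \<partial>lborel)"
    unfolding arc_length_in_def by (intro nn_integral_cong) (simp add: indicator_def)
  also have "\<dots> = ennreal (norm q) *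
      (\<integral>\<^sup>+t. indicator (cball x a) (perp_proj u b + (b \<bullet> u + norm q * t) *\<^sub>R u) \<partial>lborel)"
  proof -
    have "perp_proj u b + (b \<bullet> u + norm q * t) *\<^sub>R u = line_curve q b t" for t
      using q by (simp add: line_curve_unit u_def[symmetric] perp_proj_def algebra_simps)
    then show ?thesis
      by (simp add: nn_integral_cmult line_curve_def)
  qed
  also have "\<dots> = chord_length u a x (perp_proj u b)"
    using nn_integral_real_affine[where c="norm q" and t="b \<bullet> u"
      and f="\<lambda>s. indicator (cball x a) (perp_proj u b + s *\<^sub>R u)"] q
    by (simp add: chord_length_def)
  finally show ?thesis .
qed

lemma traj_mass_line_curves:
  assumes q: "q \<noteq> 0" and inj: "inj_on (\<lambda>b. range (line_curve q b)) B"
  defines "u \<equiv> q /\<^sub>R norm q"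
  shows "traj_mass (line_curve q ` B) a x = line_mass u (perp_proj u ` B) a x"
proof -
  have inj_curve: "inj_on (line_curve q) B"
    using inj unfolding inj_on_def by metis
  have inj_proj: "inj_on (perp_proj u) B"
    using inj by (auto simp: inj_on_def range_line_curve[OF q] u_def)
  have "traj_mass (line_curve q ` B) a x
      = (\<integral>\<^sup>+b. arc_length_in (line_curve q b) (cball x a) \<partial>count_space B)"
    unfolding traj_mass_def
    by (rule nn_integral_bij_count_space[symmetric]) (use inj_curve in \<open>simp add: bij_betw_def\<close>)
  also have "\<dots> = (\<integral>\<^sup>+b. chord_length u a x (perp_proj u b) \<partial>count_space B)"
    by (simp add: arc_length_line_curve[OF q] u_def)
  also have "\<dots> = line_mass u (perp_proj u ` B) a x"
    unfolding line_mass_def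
    by (rule nn_integral_bij_count_space) (use inj_proj in \<open>simp add: bij_betw_def\<close>)
  finally show ?thesis .
qed

theorem lemma3p1:
  fixes q :: "'a::euclidean_space" and B :: "'a set"
  assumes "q \<noteq> 0"
    and "countable B"
    and "inj_on (\<lambda>b. range (line_curve q b)) B"
  defines "T \<equiv> line_curve q ` B"
  defines "\<Lambda> \<equiv> traj_union T \<inter> perp q"
  shows "lower_density q \<Lambda> = lower_line_density T
         \<and> upper_density q \<Lambda> = upper_line_density T
         \<and> (homogeneous T \<longleftrightarrow> lower_density q \<Lambda> = upper_density q \<Lambda>)
         \<and> (lower_density q \<Lambda> = upper_density q \<Lambda> \<longrightarrow>
              line_density T = lower_density q \<Lambda> \<and> line_density T = upper_density q \<Lambda> \<and>
              (\<forall>x\<in>perp q. ((\<lambda>a::real. emeasure (count_space UNIV) (\<Lambda> \<inter> cball x a)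
                   / ball_volume (DIM('a) - 1) a) \<longlongrightarrow> line_density T) at_top))"
proof -
  define u where "u = q /\<^sub>R norm q"
  have u: "norm u = 1"
    using assms(1) by (simp add: u_def)
  have \<Lambda>: "\<Lambda> = perp_proj u ` B"
    unfolding \<Lambda>_def T_def u_def by (rule traj_union_line_curves_inter_perp[OF assms(1)])
  then have "countable \<Lambda>" and "\<And>l. l \<in> \<Lambda> \<Longrightarrow> l \<bullet> u = 0"
    using assms(2) perp_proj_orthogonal[OF u] by auto
  note densities = Liminf_line_mass_density_eq[OF u this] Limsup_line_mass_density_eq[OF u this]
  have perp: "perp q = {y. y \<bullet> u = 0}"
    unfolding u_def by (rule perp_eq_unit[OF assms(1)])
  have mass: "traj_mass T a x = line_mass u \<Lambda> a x" for a x
    unfolding T_def \<Lambda> u_def by (rule traj_mass_line_curves[OF assms(1,3)])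
  have lower: "lower_density q \<Lambda> = lower_line_density T"
    and upper: "upper_density q \<Lambda> = upper_line_density T"
    unfolding lower_density_def lower_line_density_def upper_density_def upper_line_density_def mass perp
    using densities by (simp_all add: ball_count_def)
  have "((\<lambda>a. emeasure (count_space UNIV) (\<Lambda> \<inter> cball x a) / ball_volume (DIM('a) - 1) a)
      \<longlongrightarrow> lower_density q \<Lambda>) at_top"
    if "lower_density q \<Lambda> = upper_density q \<Lambda>" and "x \<in> perp q" for x
    using that by (intro tendsto_of_Liminf_INF_eq_Limsup_SUP)
      (auto simp: lower_density_def upper_density_def)
  with lower upper show ?thesis
    unfolding homogeneous_def line_density_def by auto
qed

end
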